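(* Equip $S^1\times D^3$ (coordinates $\theta\in\mathbb{R}/2\pi\mathbb{Z}$, $x=(x_1,x_2,x_3)\in D^3$) with the product of the standard metric on $S^1$ and the flat metric on $D^3$, and write $\alpha_1=d\theta\, dx_1+dx_2\, dx_3$, $\alpha_2=d\theta\, dx_2+dx_3\, dx_1$, $\alpha_3=d\theta\, dx_3+dx_1\, dx_2$. Then there exist self-dual harmonic 2-forms for this metric, vanishing exactly along $S^1\times\{0\}$ with nondegenerate linear part, realizing both types of splittings. Namely: (A) $\omega_A=x_1\alpha_1+x_2\alpha_2-2x_3\alpha_3=*_3\mu+d\theta\wedge\mu$, where $\mu=d\big(\tfrac12(x_1^2+x_2^2)-x_3^2\big)$ and $*_3$ is the Hodge star of the flat metric on $D^3$, is a self-dual harmonic 2-form with $(L_{ij}(\theta))=\mathrm{diag}(1,1,-2)$, whose splitting is the oriented one; (B) for any $0<R<1$, $$\omega_B=(x_1\cos\theta+x_2\sin\theta)e^{x_3}\alpha_1+(x_1\sin\theta-x_2\cos\theta)e^{x_3}\alpha_2+R(-x_1\alpha_1+x_3\alpha_3)$$ is a self-dual harmonic 2-form with $$(L_{ij}(\theta))=\begin{pmatrix}\cos\theta-R&\sin\theta&0\\ \sin\theta&-\cos\theta&0\\ 0&0&R\end{pmatrix},$$ whose splitting is the unoriented one.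
   Context: For a 2-form $\omega=\sum_{i}L_i(\theta,x)\alpha_i+Q$ vanishing on $S^1\times\{0\}$, with $L_i=\sum_j L_{ij}(\theta)x_j$ and $Q$ of order at least two in $x$, the matrix $(L_{ij}(\theta))$ is (for closed $\omega$) symmetric and traceless; when it is nondegenerate, two of its eigenvalues have one sign and the third has the opposite sign for all $\theta$. The associated splitting of $\mathbb{R}^3\times S^1\to S^1$ is into the line bundle spanned by the eigenvector of the eigenvalue of the sign occurring once, and the rank 2 bundle spanned by the other two eigenvectors. The splitting is called oriented if this line bundle is orientable (trivial) and unoriented otherwise. *)

theory Defs
  imports "HOL-Analysis.Analysis"
begin

text \<open>A point is (theta, x1, x2, x3); theta ranges over the reals and forms are
  required to be 2 pi periodic in theta (so they live on S^1 = R / 2 pi Z).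
  Coordinate indices: 0 = theta, 1,2,3 = x1,x2,x3.\<close>

type_synonym pt = "real \<times> real \<times> real \<times> real"

fun coord :: "nat \<Rightarrow> pt \<Rightarrow> real" where
  "coord k (a, b, c, d) = (if k = 0 then a else if k = 1 then b else if k = 2 then c else d)"

fun setc :: "nat \<Rightarrow> real \<Rightarrow> pt \<Rightarrow> pt" where
  "setc k t (a, b, c, d) =
     (if k = 0 then (t, b, c, d) else if k = 1 then (a, t, c, d)
      else if k = 2 then (a, b, t, d) else (a, b, c, t))"

definition pd :: "nat \<Rightarrow> (pt \<Rightarrow> real) \<Rightarrow> pt \<Rightarrow> real" where
  "pd k f p = deriv (\<lambda>t. f (setc k t p)) (coord k p)"

definition S1D3 :: "pt set" where
  "S1D3 = {p. (coord 1 p)\<^sup>2 + (coord 2 p)\<^sup>2 + (coord 3 p)\<^sup>2 \<le> 1}"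

text \<open>A 2-form is given by its coefficients: w p i j is the coefficient of
  dx_i \<and> dx_j for i < j < 4 (with x_0 = theta); other entries are 0.\<close>
type_synonym form2 = "pt \<Rightarrow> nat \<Rightarrow> nat \<Rightarrow> real"

definition mk2 :: "(pt \<Rightarrow> real) \<Rightarrow> (pt \<Rightarrow> real) \<Rightarrow> (pt \<Rightarrow> real) \<Rightarrow>
                   (pt \<Rightarrow> real) \<Rightarrow> (pt \<Rightarrow> real) \<Rightarrow> (pt \<Rightarrow> real) \<Rightarrow> form2" where
  "mk2 c01 c02 c03 c12 c13 c23 = (\<lambda>p i j.
     if (i, j) = (0, 1) then c01 p else if (i, j) = (0, 2) then c02 p
     else if (i, j) = (0, 3) then c03 p else if (i, j) = (1, 2) then c12 p
     else if (i, j) = (1, 3) then c13 p else if (i, j) = (2, 3) then c23 p else 0)"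

definition fadd :: "form2 \<Rightarrow> form2 \<Rightarrow> form2" where
  "fadd v w = (\<lambda>p i j. v p i j + w p i j)"

definition fmul :: "(pt \<Rightarrow> real) \<Rightarrow> form2 \<Rightarrow> form2" where
  "fmul f w = (\<lambda>p i j. f p * w p i j)"

text \<open>alpha_1 = dtheta dx1 + dx2 dx3, alpha_2 = dtheta dx2 + dx3 dx1,
  alpha_3 = dtheta dx3 + dx1 dx2  (note dx3 dx1 = - dx1 dx3).\<close>
definition alpha :: "nat \<Rightarrow> form2" where
  "alpha k = (if k = 1 then mk2 (\<lambda>_. 1) (\<lambda>_. 0) (\<lambda>_. 0) (\<lambda>_. 0) (\<lambda>_. 0) (\<lambda>_. 1)
              else if k = 2 then mk2 (\<lambda>_. 0) (\<lambda>_. 1) (\<lambda>_. 0) (\<lambda>_. 0) (\<lambda>_. -1) (\<lambda>_. 0)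
              else if k = 3 then mk2 (\<lambda>_. 0) (\<lambda>_. 0) (\<lambda>_. 1) (\<lambda>_. 1) (\<lambda>_. 0) (\<lambda>_. 0)
              else (\<lambda>_ _ _. 0))"

text \<open>Hodge star of the product (flat) metric, orientation dtheta dx1 dx2 dx3.\<close>
definition hodge :: "form2 \<Rightarrow> form2" where
  "hodge w = mk2 (\<lambda>p. w p 2 3) (\<lambda>p. - w p 1 3) (\<lambda>p. w p 1 2)
                 (\<lambda>p. w p 0 3) (\<lambda>p. - w p 0 2) (\<lambda>p. w p 0 1)"

definition self_dual :: "form2 \<Rightarrow> bool" where
  "self_dual w \<longleftrightarrow> hodge w = w"

text \<open>Coefficient of dx_i dx_j dx_k (i<j<k) of the exterior derivative.\<close>
definition dcoef :: "form2 \<Rightarrow> pt \<Rightarrow> nat \<Rightarrow> nat \<Rightarrow> nat \<Rightarrow> real" where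
  "dcoef w p i j k = pd i (\<lambda>q. w q j k) p - pd j (\<lambda>q. w q i k) p + pd k (\<lambda>q. w q i j) p"

definition closed_on :: "pt set \<Rightarrow> form2 \<Rightarrow> bool" where
  "closed_on S w \<longleftrightarrow> (\<forall>p\<in>S. \<forall>i j k. i < j \<and> j < k \<and> k < 4 \<longrightarrow> dcoef w p i j k = 0)"

definition diff_on :: "pt set \<Rightarrow> form2 \<Rightarrow> bool" where
  "diff_on S w \<longleftrightarrow> (\<forall>p\<in>S. \<forall>i j. (\<lambda>q. w q i j) differentiable (at p))"

definition periodic_form :: "form2 \<Rightarrow> bool" where
  "periodic_form w \<longleftrightarrow> (\<forall>t a b c i j. w (t + 2 * pi, a, b, c) i j = w (t, a, b, c) i j)"

definition harmonic_on :: "pt set \<Rightarrow> form2 \<Rightarrow> bool" where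
  "harmonic_on S w \<longleftrightarrow> diff_on S w \<and> diff_on S (hodge w) \<and> closed_on S w \<and> closed_on S (hodge w)"

definition sd_harmonic :: "form2 \<Rightarrow> bool" where
  "sd_harmonic w \<longleftrightarrow> periodic_form w \<and> self_dual w \<and> harmonic_on S1D3 w"

definition vanishes_exactly_on_core :: "form2 \<Rightarrow> bool" where
  "vanishes_exactly_on_core w \<longleftrightarrow>
     (\<forall>p\<in>S1D3. (\<forall>i j. w p i j = 0) \<longleftrightarrow> (coord 1 p = 0 \<and> coord 2 p = 0 \<and> coord 3 p = 0))"

text \<open>For self-dual w = sum_i L_i alpha_i + Q, the coefficient of alpha_i is w_{0i};
  L_ij(theta) is its x_j derivative along S^1 x {0}.\<close>
definition Lc :: "form2 \<Rightarrow> real \<Rightarrow> nat \<Rightarrow> nat \<Rightarrow> real" where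
  "Lc w t i j = pd j (\<lambda>q. w q 0 i) (t, 0, 0, 0)"

definition Lmat :: "form2 \<Rightarrow> real \<Rightarrow> real^3^3" where
  "Lmat w t = vector [vector [Lc w t 1 1, Lc w t 1 2, Lc w t 1 3],
                      vector [Lc w t 2 1, Lc w t 2 2, Lc w t 2 3],
                      vector [Lc w t 3 1, Lc w t 3 2, Lc w t 3 3]]"

definition nondegenerate :: "form2 \<Rightarrow> bool" where
  "nondegenerate w \<longleftrightarrow> (\<forall>t. det (Lmat w t) \<noteq> 0)"

definition pos_space :: "real^3^3 \<Rightarrow> (real^3) set" where
  "pos_space M = span {v. \<exists>l>0. M *v v = l *\<^sub>R v}"

definition neg_space :: "real^3^3 \<Rightarrow> (real^3) set" where
  "neg_space M = span {v. \<exists>l<0. M *v v = l *\<^sub>R v}"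

definition once_line :: "real^3^3 \<Rightarrow> (real^3) set" where
  "once_line M = (if dim (pos_space M) = 1 then pos_space M else neg_space M)"

text \<open>The splitting is oriented iff the line bundle over S^1 is trivial, i.e. has a
  continuous nowhere-vanishing 2 pi periodic section.\<close>
definition oriented_splitting :: "form2 \<Rightarrow> bool" where
  "oriented_splitting w \<longleftrightarrow>
     (\<exists>v :: real \<Rightarrow> real^3. continuous_on UNIV v \<and>
        (\<forall>t. v (t + 2 * pi) = v t) \<and>
        (\<forall>t. v t \<noteq> 0 \<and> v t \<in> once_line (Lmat w t)))"

abbreviation x1 :: "pt \<Rightarrow> real" where "x1 \<equiv> coord 1"
abbreviation x2 :: "pt \<Rightarrow> real" where "x2 \<equiv> coord 2"
abbreviation x3 :: "pt \<Rightarrow> real" where "x3 \<equiv> coord 3"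
abbreviation th :: "pt \<Rightarrow> real" where "th \<equiv> coord 0"

definition omegaA :: form2 where
  "omegaA = fadd (fmul x1 (alpha 1)) (fadd (fmul x2 (alpha 2)) (fmul (\<lambda>p. - 2 * x3 p) (alpha 3)))"

text \<open>mu = d h as a 1-form on D^3 (coefficients of dx1, dx2, dx3), *_3 of a 1-form,
  and dtheta wedge a 1-form.\<close>
definition d3 :: "(pt \<Rightarrow> real) \<Rightarrow> nat \<Rightarrow> pt \<Rightarrow> real" where
  "d3 h k p = pd k h p"

definition star3 :: "(nat \<Rightarrow> pt \<Rightarrow> real) \<Rightarrow> form2" where
  "star3 m = mk2 (\<lambda>_. 0) (\<lambda>_. 0) (\<lambda>_. 0) (m 3) (\<lambda>p. - m 2 p) (m 1)"

definition dtheta_wedge :: "(nat \<Rightarrow> pt \<Rightarrow> real) \<Rightarrow> form2" where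
  "dtheta_wedge m = mk2 (m 1) (m 2) (m 3) (\<lambda>_. 0) (\<lambda>_. 0) (\<lambda>_. 0)"

definition muA :: "nat \<Rightarrow> pt \<Rightarrow> real" where
  "muA = d3 (\<lambda>p. (1/2) * ((x1 p)\<^sup>2 + (x2 p)\<^sup>2) - (x3 p)\<^sup>2)"

definition omegaB :: "real \<Rightarrow> form2" where
  "omegaB R = fadd (fmul (\<lambda>p. (x1 p * cos (th p) + x2 p * sin (th p)) * exp (x3 p)) (alpha 1))
             (fadd (fmul (\<lambda>p. (x1 p * sin (th p) - x2 p * cos (th p)) * exp (x3 p)) (alpha 2))
                   (fmul (\<lambda>_. R) (fadd (fmul (\<lambda>p. - x1 p) (alpha 1)) (fmul x3 (alpha 3)))))"

end

theory Submission
  imports Defs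
begin

text \<open>Write a form as \<open>\<omega> = f\<^sub>1 \<alpha>\<^sub>1 + f\<^sub>2 \<alpha>\<^sub>2 + f\<^sub>3 \<alpha>\<^sub>3\<close>. The \<open>\<alpha>\<^sub>i\<close> are self-dual,
  and \<open>d\<omega> = 0\<close> says exactly that \<open>f\<close> is divergence free in \<open>x\<close> and \<open>\<partial>\<^sub>\<theta> f = curl f\<close>;
  both examples satisfy this by direct differentiation, and their linear parts are read off
  from the \<open>x\<close>-derivatives of \<open>f\<close> along the core.

  For \<open>\<omega>\<^sub>A\<close> the matrix \<open>diag(1, 1, -2)\<close> is constant, so \<open>e\<^sub>3\<close> is a global section of the line.
  For \<open>\<omega>\<^sub>B\<close> the negative eigenvalue is simple with eigenvectors in the plane \<open>x\<^sub>3 = 0\<close>,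
  where the quadratic form of \<open>L(\<theta>)\<close> is \<open>(v\<cdot>p)\<^sup>2 - (v\<cdot>w)\<^sup>2 - R v\<^sub>1\<^sup>2\<close> with
  \<open>p = (cos (\<theta>/2), sin (\<theta>/2))\<close> and \<open>w = (- sin (\<theta>/2), cos (\<theta>/2))\<close>; hence a negative
  eigenvector is never orthogonal to \<open>w\<close>. Since \<open>w(\<theta> + 2\<pi>) = - w(\<theta>)\<close>, pairing a periodic
  nowhere vanishing section with \<open>w\<close> gives a continuous nowhere vanishing function that changes
  sign over a period, contradicting the intermediate value theorem.\<close>

lemma pd_tuple:
  "pd 0 f (a, b, c, d) = deriv (\<lambda>s. f (s, b, c, d)) a"
  "pd 1 f (a, b, c, d) = deriv (\<lambda>s. f (a, s, c, d)) b"
  "pd 2 f (a, b, c, d) = deriv (\<lambda>s. f (a, b, s, d)) c"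
  "pd 3 f (a, b, c, d) = deriv (\<lambda>s. f (a, b, c, s)) d"
  by (simp_all add: pd_def)

lemma less_4_cases: "(k::nat) < 4 \<longleftrightarrow> k = 0 \<or> k = 1 \<or> k = 2 \<or> k = 3"
  by auto

lemma pd_linear:
  assumes "j < 4" "k < 4"
  shows "pd k (\<lambda>p. r * coord j p) p = (if k = j then r else 0)"
proof -
  obtain a b c d where "p = (a, b, c, d)" by (cases p)
  with assms show ?thesis
    unfolding less_4_cases pd_def
    by (elim disjE) (auto intro!: DERIV_imp_deriv derivative_eq_intros)
qed

lemma pd_coord: "j < 4 \<Longrightarrow> k < 4 \<Longrightarrow> pd k (coord j) p = (if k = j then 1 else 0)"
  using pd_linear[of j k 1 p] by simp

lemma differentiable_coord: "coord k differentiable at p"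
proof -
  have "coord k = (if k = 0 then fst else if k = 1 then (\<lambda>p. fst (snd p))
                   else if k = 2 then (\<lambda>p. fst (snd (snd p))) else (\<lambda>p. snd (snd (snd p))))"
    by (auto simp: fun_eq_iff)
  then have "bounded_linear (coord k)"
    by (simp add: bounded_linear_fst bounded_linear_snd
        bounded_linear_compose[OF bounded_linear_fst] bounded_linear_compose[OF bounded_linear_snd])
  then show ?thesis
    by (rule bounded_linear_imp_differentiable)
qed

lemma differentiable_coord_comp:
  assumes "\<And>x. (g has_real_derivative g' x) (at x)"
  shows "(\<lambda>p. g (coord k p)) differentiable at p"
  by (rule differentiable_compose[OF _ differentiable_coord]) (use assms real_differentiable_def in blast)

lemma differentiable_setc: "(\<lambda>s. setc k s p) differentiable at t"
  by (cases p; cases "k = 0"; cases "k = 1"; cases "k = 2") (auto intro!: derivative_intros)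

lemma setc_coord: "setc k (coord k p) p = p"
  by (cases p) auto

lemma pd_minus:
  assumes "f differentiable at p"
  shows "pd k (\<lambda>q. - f q) p = - pd k f p"
proof -
  have "(\<lambda>s. f (setc k s p)) differentiable at (coord k p)"
    by (rule differentiable_compose[OF _ differentiable_setc]) (simp add: setc_coord assms)
  then show ?thesis
    unfolding pd_def
    by (intro DERIV_imp_deriv DERIV_minus) (simp add: DERIV_deriv_iff_real_differentiable)
qed

definition alpha_comb :: "(pt \<Rightarrow> real) \<Rightarrow> (pt \<Rightarrow> real) \<Rightarrow> (pt \<Rightarrow> real) \<Rightarrow> form2" where
  "alpha_comb f1 f2 f3 = fadd (fmul f1 (alpha 1)) (fadd (fmul f2 (alpha 2)) (fmul f3 (alpha 3)))"

definition theta_periodic :: "(pt \<Rightarrow> real) \<Rightarrow> bool" where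
  "theta_periodic f \<longleftrightarrow> (\<forall>t a b c. f (t + 2 * pi, a, b, c) = f (t, a, b, c))"

lemma alpha_comb_mk2: "alpha_comb f1 f2 f3 = mk2 f1 f2 f3 f3 (\<lambda>p. - f2 p) f1"
  by (auto simp: fun_eq_iff alpha_comb_def fadd_def fmul_def alpha_def mk2_def)

lemma mk2_entry:
  "(\<lambda>q. mk2 a b c d e f q i j) =
     (if (i, j) = (0, 1) then a else if (i, j) = (0, 2) then b else if (i, j) = (0, 3) then c
      else if (i, j) = (1, 2) then d else if (i, j) = (1, 3) then e
      else if (i, j) = (2, 3) then f else (\<lambda>_. 0))"
  unfolding mk2_def by (rule ext) (simp only: if_distrib[where f = "\<lambda>g. g x" for x])

lemma self_dual_alpha_comb: "self_dual (alpha_comb f1 f2 f3)"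
  by (simp add: self_dual_def hodge_def alpha_comb_mk2 mk2_def fun_eq_iff)

lemma periodic_form_alpha_comb:
  "theta_periodic f1 \<Longrightarrow> theta_periodic f2 \<Longrightarrow> theta_periodic f3 \<Longrightarrow> periodic_form (alpha_comb f1 f2 f3)"
  by (simp add: periodic_form_def theta_periodic_def alpha_comb_mk2 mk2_def)

lemma diff_on_alpha_comb:
  assumes "\<And>p. p \<in> S \<Longrightarrow> f1 differentiable at p \<and> f2 differentiable at p \<and> f3 differentiable at p"
  shows "diff_on S (alpha_comb f1 f2 f3)"
  using assms by (simp add: diff_on_def alpha_comb_mk2 mk2_entry differentiable_minus)

lemma all_triples_below_4:
  "(\<forall>i j k. i < j \<and> j < k \<and> k < (4::nat) \<longrightarrow> P i j k) \<longleftrightarrow> P 0 1 2 \<and> P 0 1 3 \<and> P 0 2 3 \<and> P 1 2 3"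
  (is "?L \<longleftrightarrow> ?R")
proof
  assume ?R
  show ?L
  proof (intro allI impI)
    fix i j k :: nat
    assume "i < j \<and> j < k \<and> k < 4"
    then have "(i, j, k) \<in> {(0, 1, 2), (0, 1, 3), (0, 2, 3), (1, 2, 3)}"
      by auto
    with \<open>?R\<close> show "P i j k"
      by auto
  qed
qed auto

lemma dcoef_alpha_comb:
  assumes "f2 differentiable at p"
  shows "dcoef (alpha_comb f1 f2 f3) p 0 1 2 = pd 0 f3 p - pd 1 f2 p + pd 2 f1 p"
    and "dcoef (alpha_comb f1 f2 f3) p 0 1 3 = - pd 0 f2 p - pd 1 f3 p + pd 3 f1 p"
    and "dcoef (alpha_comb f1 f2 f3) p 0 2 3 = pd 0 f1 p - pd 2 f3 p + pd 3 f2 p"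
    and "dcoef (alpha_comb f1 f2 f3) p 1 2 3 = pd 1 f1 p + pd 2 f2 p + pd 3 f3 p"
  using assms by (simp_all add: dcoef_def alpha_comb_mk2 mk2_def pd_minus)

lemma closed_on_alpha_comb_iff:
  assumes "\<And>p. p \<in> S \<Longrightarrow> f2 differentiable at p"
  shows "closed_on S (alpha_comb f1 f2 f3) \<longleftrightarrow>
    (\<forall>p\<in>S. pd 1 f1 p + pd 2 f2 p + pd 3 f3 p = 0
          \<and> pd 0 f1 p = pd 2 f3 p - pd 3 f2 p
          \<and> pd 0 f2 p = pd 3 f1 p - pd 1 f3 p
          \<and> pd 0 f3 p = pd 1 f2 p - pd 2 f1 p)"
  unfolding closed_on_def all_triples_below_4
  using assms by (simp add: dcoef_alpha_comb[unfolded One_nat_def]) (intro ball_cong refl; linarith)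

lemma sd_harmonic_alpha_comb:
  assumes "theta_periodic f1" "theta_periodic f2" "theta_periodic f3"
    and "\<And>p. p \<in> S1D3 \<Longrightarrow> f1 differentiable at p \<and> f2 differentiable at p \<and> f3 differentiable at p"
    and "closed_on S1D3 (alpha_comb f1 f2 f3)"
  shows "sd_harmonic (alpha_comb f1 f2 f3)"
  using self_dual_alpha_comb[of f1 f2 f3] assms
  by (simp add: sd_harmonic_def harmonic_on_def self_dual_def periodic_form_alpha_comb diff_on_alpha_comb)

lemma alpha_comb_eq_0_iff:
  "(\<forall>i j. alpha_comb f1 f2 f3 p i j = 0) \<longleftrightarrow> f1 p = 0 \<and> f2 p = 0 \<and> f3 p = 0"
proof
  assume "\<forall>i j. alpha_comb f1 f2 f3 p i j = 0"
  from this[rule_format, of 0 1] this[rule_format, of 0 2] this[rule_format, of 0 3]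
  show "f1 p = 0 \<and> f2 p = 0 \<and> f3 p = 0"
    by (simp add: alpha_comb_mk2 mk2_def)
qed (simp add: alpha_comb_mk2 mk2_def)

lemma Lmat_alpha_comb:
  "Lmat (alpha_comb f1 f2 f3) t =
     vector [vector [pd 1 f1 (t, 0, 0, 0), pd 2 f1 (t, 0, 0, 0), pd 3 f1 (t, 0, 0, 0)],
             vector [pd 1 f2 (t, 0, 0, 0), pd 2 f2 (t, 0, 0, 0), pd 3 f2 (t, 0, 0, 0)],
             vector [pd 1 f3 (t, 0, 0, 0), pd 2 f3 (t, 0, 0, 0), pd 3 f3 (t, 0, 0, 0)]]"
  by (simp add: Lmat_def Lc_def alpha_comb_mk2 mk2_def)

lemma star3_add_dtheta_wedge: "fadd (star3 m) (dtheta_wedge m) = alpha_comb (m 1) (m 2) (m 3)"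
  by (auto simp: fun_eq_iff fadd_def star3_def dtheta_wedge_def alpha_comb_mk2 mk2_def)

lemma matrix3_mult_vector:
  "(vector [vector [a, b, c], vector [d, e, f], vector [g, h, i]] :: real^3^3) *v v =
     vector [a * v$1 + b * v$2 + c * v$3, d * v$1 + e * v$2 + f * v$3, g * v$1 + h * v$2 + i * v$3]"
  by (simp add: vec_eq_iff forall_3 matrix_vector_mult_def sum_3)

lemma vec3_eq_iff: "(v :: real^3) = w \<longleftrightarrow> v$1 = w$1 \<and> v$2 = w$2 \<and> v$3 = w$3"
  by (simp add: vec_eq_iff forall_3)

lemma independent_pair:
  fixes u w :: "real^'n"
  assumes "u $ k = 0" "u \<noteq> 0" "w $ k \<noteq> 0"
  shows "independent {u, w}"
proof -
  have "w \<notin> span {u}" "u \<notin> span {w}"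
    using assms by (auto simp: span_singleton)
  moreover have "w \<noteq> 0"
    using assms(3) by auto
  ultimately show ?thesis
    using assms(2) by (simp add: independent_insert)
qed

lemma once_line_eq_neg_space:
  fixes M :: "real^3^3"
  assumes "M *v u = a *\<^sub>R u" "0 < a" "u \<noteq> 0" "u $ k = 0"
    and "M *v w = b *\<^sub>R w" "0 < b" "w $ k \<noteq> 0"
  shows "once_line M = neg_space M"
proof -
  have "{u, w} \<subseteq> pos_space M"
    using assms unfolding pos_space_def by (auto intro: span_base)
  then have "card {u, w} \<le> dim (pos_space M)"
    using independent_pair[OF assms(4,3,7)] by (rule independent_card_le_dim)
  moreover have "u \<noteq> w"
    using assms(4,7) by auto
  ultimately show ?thesis
    by (simp add: once_line_def)
qed

lemma subspace_eigenspace: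
  fixes M :: "real^'n^'n"
  shows "subspace {v. M *v v = l *\<^sub>R v}"
  by (simp add: subspace_def matrix_vector_right_distrib scaleR_add_right matrix_vector_mult_scaleR)

lemma neg_space_eq_neg_eigenvectors:
  fixes M :: "real^3^3"
  assumes "\<And>u w l k. M *v u = l *\<^sub>R u \<Longrightarrow> u \<noteq> 0 \<Longrightarrow> l < 0 \<Longrightarrow>
                      M *v w = k *\<^sub>R w \<Longrightarrow> w \<noteq> 0 \<Longrightarrow> k < 0 \<Longrightarrow> l = k"
  shows "neg_space M = {v. \<exists>l<0. M *v v = l *\<^sub>R v}"
proof
  show "{v. \<exists>l<0. M *v v = l *\<^sub>R v} \<subseteq> neg_space M"
    unfolding neg_space_def by (rule span_superset)
  show "neg_space M \<subseteq> {v. \<exists>l<0. M *v v = l *\<^sub>R v}"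
  proof (cases "\<exists>u l. M *v u = l *\<^sub>R u \<and> u \<noteq> 0 \<and> l < 0")
    case True
    then obtain u l where u: "M *v u = l *\<^sub>R u" "u \<noteq> 0" "l < 0"
      by blast
    have "M *v v = l *\<^sub>R v" if "M *v v = k *\<^sub>R v" "k < 0" for v k
      using assms[OF u that(1) _ that(2)] that(1) by (cases "v = 0") auto
    then have "{v. \<exists>k<0. M *v v = k *\<^sub>R v} \<subseteq> {v. M *v v = l *\<^sub>R v}"
      by blast
    then have "neg_space M \<subseteq> {v. M *v v = l *\<^sub>R v}"
      unfolding neg_space_def by (rule span_minimal[OF _ subspace_eigenspace])
    with \<open>l < 0\<close> show ?thesis
      by blast
  next
    case False
    then have "{v. \<exists>l<0. M *v v = l *\<^sub>R v} \<subseteq> {0}"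
      by auto
    then have "neg_space M \<subseteq> {0}"
      unfolding neg_space_def by (rule span_minimal) simp
    then show ?thesis
      by (auto intro!: exI[of _ "-1"])
  qed
qed

lemma continuous_antiperiodic_has_zero:
  fixes g :: "real \<Rightarrow> real"
  assumes "continuous_on {a..b} g" "a \<le> b" "g b = - g a"
  shows "\<exists>x\<in>{a..b}. g x = 0"
proof (cases "g a \<le> 0")
  case True
  then have "\<exists>x. a \<le> x \<and> x \<le> b \<and> g x = 0"
    using assms by (intro IVT') auto
  then show ?thesis
    by auto
next
  case False
  then have "\<exists>x. a \<le> x \<and> x \<le> b \<and> g x = 0"
    using assms by (intro IVT2') auto
  then show ?thesis
    by auto
qed

subsection \<open>The form \<open>\<omega>\<^sub>A\<close>\<close>

lemma omegaA_alpha_comb: "omegaA = alpha_comb x1 x2 (\<lambda>p. -2 * x3 p)"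
  by (simp add: omegaA_def alpha_comb_def)

lemma muA_components: "muA 1 = x1" "muA 2 = x2" "muA 3 = (\<lambda>p. -2 * x3 p)"
  by (auto simp: fun_eq_iff split_paired_All muA_def d3_def pd_def
           intro!: DERIV_imp_deriv derivative_eq_intros)

lemma omegaA_eq_star3_muA: "omegaA = fadd (star3 muA) (dtheta_wedge muA)"
  unfolding star3_add_dtheta_wedge muA_components omegaA_alpha_comb ..

lemma sd_harmonic_omegaA: "sd_harmonic omegaA"
  unfolding omegaA_alpha_comb
proof (rule sd_harmonic_alpha_comb)
  show "theta_periodic x1" "theta_periodic x2" "theta_periodic (\<lambda>p. -2 * x3 p)"
    by (simp_all add: theta_periodic_def)
  show "x1 differentiable at p \<and> x2 differentiable at p \<and> (\<lambda>p. -2 * x3 p) differentiable at p" for p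
    by (simp add: differentiable_coord)
  show "closed_on S1D3 (alpha_comb x1 x2 (\<lambda>p. -2 * x3 p))"
    by (simp add: closed_on_alpha_comb_iff differentiable_coord pd_coord pd_linear pd_minus)
qed

lemma vanishes_exactly_on_core_omegaA: "vanishes_exactly_on_core omegaA"
  by (simp add: vanishes_exactly_on_core_def omegaA_alpha_comb alpha_comb_eq_0_iff)

lemma Lmat_omegaA: "Lmat omegaA t = vector [vector [1, 0, 0], vector [0, 1, 0], vector [0, 0, -2]]"
  by (simp add: omegaA_alpha_comb Lmat_alpha_comb differentiable_coord pd_coord pd_linear pd_minus)

lemma nondegenerate_omegaA: "nondegenerate omegaA"
  by (simp add: nondegenerate_def Lmat_omegaA det_3)

lemma oriented_splitting_omegaA: "oriented_splitting omegaA"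
proof -
  let ?M = "vector [vector [1, 0, 0], vector [0, 1, 0], vector [0, 0, -2]] :: real^3^3"
  have "once_line ?M = neg_space ?M"
    by (rule once_line_eq_neg_space[where u = "vector [1, 0, 0]" and w = "vector [0, 1, 0]"
          and k = 2 and a = 1 and b = 1]) (simp_all add: matrix3_mult_vector vec3_eq_iff)
  moreover have "vector [0, 0, 1] \<in> neg_space ?M"
    unfolding neg_space_def
    by (rule span_base) (simp add: matrix3_mult_vector vec3_eq_iff exI[of _ "-2"])
  ultimately show ?thesis
    unfolding oriented_splitting_def Lmat_omegaA
    by (intro exI[of _ "\<lambda>_. vector [0, 0, 1]"]) (simp add: vec3_eq_iff)
qed

subsection \<open>The form \<open>\<omega>\<^sub>B\<close>\<close>

definition uB :: "real \<Rightarrow> pt \<Rightarrow> real" where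
  "uB R p = (x1 p * cos (th p) + x2 p * sin (th p)) * exp (x3 p) - R * x1 p"

definition vB :: "pt \<Rightarrow> real" where
  "vB p = (x1 p * sin (th p) - x2 p * cos (th p)) * exp (x3 p)"

definition LB :: "real \<Rightarrow> real \<Rightarrow> real^3^3" where
  "LB R t = vector [vector [cos t - R, sin t, 0], vector [sin t, - cos t, 0], vector [0, 0, R]]"

lemma omegaB_alpha_comb: "omegaB R = alpha_comb (uB R) vB (\<lambda>p. R * x3 p)"
  by (auto simp: fun_eq_iff omegaB_def alpha_comb_def fadd_def fmul_def uB_def vB_def algebra_simps)

lemma pd_uB:
  "pd 0 (uB R) (a, b, c, d) = (c * cos a - b * sin a) * exp d"
  "pd 1 (uB R) (a, b, c, d) = cos a * exp d - R"
  "pd 2 (uB R) (a, b, c, d) = sin a * exp d"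
  "pd 3 (uB R) (a, b, c, d) = (b * cos a + c * sin a) * exp d"
  unfolding pd_tuple uB_def
  by (rule DERIV_imp_deriv; auto intro!: derivative_eq_intros simp: algebra_simps)+

lemma pd_vB:
  "pd 0 vB (a, b, c, d) = (b * cos a + c * sin a) * exp d"
  "pd 1 vB (a, b, c, d) = sin a * exp d"
  "pd 2 vB (a, b, c, d) = - cos a * exp d"
  "pd 3 vB (a, b, c, d) = (b * sin a - c * cos a) * exp d"
  unfolding pd_tuple vB_def
  by (rule DERIV_imp_deriv; auto intro!: derivative_eq_intros simp: algebra_simps)+

lemma differentiable_uB: "uB R differentiable at p"
  and differentiable_vB: "vB differentiable at p"
  using DERIV_sin DERIV_cos DERIV_exp
  unfolding uB_def vB_def
  by (intro differentiable_diff differentiable_add differentiable_mult differentiable_const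
        differentiable_coord differentiable_coord_comp; blast)+

lemma sd_harmonic_omegaB: "sd_harmonic (omegaB R)"
  unfolding omegaB_alpha_comb
proof (rule sd_harmonic_alpha_comb)
  show "theta_periodic (uB R)" "theta_periodic vB" "theta_periodic (\<lambda>p. R * x3 p)"
    by (simp_all add: theta_periodic_def uB_def vB_def)
  show "uB R differentiable at p \<and> vB differentiable at p \<and> (\<lambda>p. R * x3 p) differentiable at p" for p
    by (simp add: differentiable_uB differentiable_vB differentiable_coord)
  have "pd 1 (uB R) p + pd 2 vB p + pd 3 (\<lambda>p. R * x3 p) p = 0
      \<and> pd 0 (uB R) p = pd 2 (\<lambda>p. R * x3 p) p - pd 3 vB p
      \<and> pd 0 vB p = pd 3 (uB R) p - pd 1 (\<lambda>p. R * x3 p) p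
      \<and> pd 0 (\<lambda>p. R * x3 p) p = pd 1 vB p - pd 2 (uB R) p" for p
    by (cases p) (simp add: pd_uB[unfolded One_nat_def] pd_vB[unfolded One_nat_def] pd_linear algebra_simps)
  then show "closed_on S1D3 (alpha_comb (uB R) vB (\<lambda>p. R * x3 p))"
    by (simp add: closed_on_alpha_comb_iff differentiable_vB)
qed

lemma Lmat_omegaB: "Lmat (omegaB R) t = LB R t"
  by (simp add: omegaB_alpha_comb Lmat_alpha_comb LB_def pd_uB[unfolded One_nat_def]
      pd_vB[unfolded One_nat_def] pd_linear)

lemma sin_mult_sin: "sin t * sin t = 1 - cos t * cos t" for t :: real
  using sin_squared_eq[of t] by (simp add: power2_eq_square)

lemma LB_eigen_iff:
  "LB R t *v v = l *\<^sub>R v \<longleftrightarrow>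
     (cos t - R) * v$1 + sin t * v$2 = l * v$1 \<and> sin t * v$1 - cos t * v$2 = l * v$2 \<and> R * v$3 = l * v$3"
  by (simp add: LB_def matrix3_mult_vector vec3_eq_iff)

lemma LB_eigen_plane:
  assumes "LB R t *v v = l *\<^sub>R v" "v \<noteq> 0" "l \<noteq> R"
  shows "v $ 3 = 0" "l\<^sup>2 + R * l + R * cos t = 1"
proof -
  define c s where "c = cos t" and "s = sin t"
  obtain e1: "(c - R - l) * v$1 + s * v$2 = 0" and e2: "s * v$1 - (c + l) * v$2 = 0"
    and e3: "(R - l) * v$3 = 0"
    using assms(1) unfolding LB_eigen_iff c_def s_def by (simp add: algebra_simps)
  then show v3: "v $ 3 = 0"
    using assms(3) by simp
  with assms(2) have "v$1 \<noteq> 0 \<or> v$2 \<noteq> 0"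
    by (auto simp: vec3_eq_iff)
  define D where "D = l\<^sup>2 + R * l + R * c - (s\<^sup>2 + c\<^sup>2)"
  have "D * v$1 = - ((c + l) * ((c - R - l) * v$1 + s * v$2) + s * (s * v$1 - (c + l) * v$2))"
    "D * v$2 = (c - R - l) * (s * v$1 - (c + l) * v$2) - s * ((c - R - l) * v$1 + s * v$2)"
    unfolding D_def by (simp_all add: algebra_simps power2_eq_square)
  with e1 e2 \<open>v$1 \<noteq> 0 \<or> v$2 \<noteq> 0\<close> have "D = 0"
    by auto
  then show "l\<^sup>2 + R * l + R * cos t = 1"
    by (simp add: D_def c_def s_def)
qed

lemma LB_plane_eigenvector:
  assumes "l\<^sup>2 + R * l + R * cos t = 1"
  shows "\<exists>u. u $ 3 = 0 \<and> u \<noteq> 0 \<and> LB R t *v u = l *\<^sub>R u"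
proof (cases "cos t + l = 0 \<and> sin t = 0")
  case True
  then have "l = - cos t" "sin t = 0"
    by auto
  then show ?thesis
    by (intro exI[of _ "vector [0, 1, 0]"]) (simp add: LB_def matrix3_mult_vector vec3_eq_iff)
next
  case False
  have "(cos t - R) * (cos t + l) + sin t * sin t = l * (cos t + l)"
    using assms by (simp add: sin_mult_sin algebra_simps power2_eq_square)
  with False show ?thesis
    by (intro exI[of _ "vector [cos t + l, sin t, 0]"])
      (auto simp: LB_def matrix3_mult_vector vec3_eq_iff algebra_simps)
qed

context
  fixes R :: real
  assumes R: "0 < R" "R < 1"
begin

lemma R_cos_less_1: "R * cos t < 1"
proof -
  have "R * cos t \<le> R"
    using R cos_le_one[of t] by (simp add: mult_left_le)
  with R show ?thesis
    by linarith
qed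

lemma nondegenerate_omegaB: "nondegenerate (omegaB R)"
proof -
  have "det (LB R t) = R * (R * cos t - 1)" for t
    by (simp add: LB_def det_3 sin_mult_sin algebra_simps)
  moreover have "R * (R * cos t - 1) \<noteq> 0" for t
    using R R_cos_less_1[of t] by simp
  ultimately show ?thesis
    by (simp add: nondegenerate_def Lmat_omegaB)
qed

lemma vanishes_exactly_on_core_omegaB: "vanishes_exactly_on_core (omegaB R)"
  unfolding vanishes_exactly_on_core_def omegaB_alpha_comb alpha_comb_eq_0_iff
proof (intro ballI iffI)
  fix p :: pt
  obtain t a b c where p: "p = (t, a, b, c)"
    by (cases p)
  assume zero: "uB R p = 0 \<and> vB p = 0 \<and> R * x3 p = 0"
  then have "c = 0"
    using R by (simp add: p)
  with zero have u: "a * cos t + b * sin t = R * a" and v: "a * sin t - b * cos t = 0"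
    by (simp_all add: p uB_def vB_def)
  have "(a * cos t + b * sin t)\<^sup>2 + (a * sin t - b * cos t)\<^sup>2 = a\<^sup>2 + b\<^sup>2"
    by (simp add: power2_eq_square sin_mult_sin algebra_simps)
  with u v have sum: "(1 - R\<^sup>2) * a\<^sup>2 + b\<^sup>2 = 0"
    by (simp add: algebra_simps power2_eq_square)
  have "0 < 1 - R\<^sup>2"
    using R by (simp add: power_less_one_iff abs_less_iff)
  then have "0 \<le> (1 - R\<^sup>2) * a\<^sup>2"
    by simp
  with sum zero_le_power2[of b] have "(1 - R\<^sup>2) * a\<^sup>2 = 0" "b\<^sup>2 = 0"
    by linarith+
  with \<open>0 < 1 - R\<^sup>2\<close> have "a = 0" "b = 0"
    by simp_all
  with \<open>c = 0\<close> show "x1 p = 0 \<and> x2 p = 0 \<and> x3 p = 0"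
    by (simp add: p)
qed (simp add: uB_def vB_def)

lemma LB_neg_eigenvalue_unique:
  assumes "LB R t *v u = l *\<^sub>R u" "u \<noteq> 0" "l < 0"
    and "LB R t *v w = k *\<^sub>R w" "w \<noteq> 0" "k < 0"
  shows "l = k"
proof (rule ccontr)
  assume "l \<noteq> k"
  have l: "l\<^sup>2 + R * l + R * cos t = 1" and k: "k\<^sup>2 + R * k + R * cos t = 1"
    using LB_eigen_plane(2) assms R by fastforce+
  then have "(l - k) * (l + k + R) = 0"
    by (simp add: algebra_simps power2_eq_square)
  with \<open>l \<noteq> k\<close> have "k = - R - l"
    by simp
  have "l * k = - (R * l) - l * l"
    unfolding \<open>k = - R - l\<close> by (simp add: algebra_simps)
  with l have "l * k = R * cos t - 1"
    unfolding power2_eq_square by linarith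
  moreover have "0 < l * k"
    using assms(3,6) by (simp add: mult_neg_neg)
  ultimately show False
    using R_cos_less_1[of t] by linarith
qed

lemma once_line_LB: "once_line (LB R t) = neg_space (LB R t)"
proof -
  let ?g = "\<lambda>l. l\<^sup>2 + R * l + R * cos t"
  have "0 \<le> R * (1 + cos t)"
    using R cos_ge_minus_one[of t] by (intro mult_nonneg_nonneg) linarith+
  then have "?g 0 \<le> 1" "1 \<le> ?g 1"
    using R_cos_less_1[of t] by (simp_all add: algebra_simps)
  moreover have "continuous_on {0..1} ?g"
    by (intro continuous_intros)
  ultimately obtain l where "0 \<le> l" "l \<le> 1" "?g l = 1"
    using IVT'[of ?g 0 1 1] by auto
  moreover have "l \<noteq> 0"
    using \<open>?g l = 1\<close> R_cos_less_1[of t] by auto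
  ultimately obtain u where "u $ 3 = 0" "u \<noteq> 0" "LB R t *v u = l *\<^sub>R u" "0 < l"
    using LB_plane_eigenvector by fastforce
  moreover have "LB R t *v vector [0, 0, 1] = R *\<^sub>R vector [0, 0, 1]"
    by (simp add: LB_eigen_iff)
  ultimately show ?thesis
    using R by (intro once_line_eq_neg_space[where u = u and a = l and k = 3 and w = "vector [0, 0, 1]" and b = R])
      (simp_all add: vec3_eq_iff)
qed

lemma LB_neg_eigenvector_half_angle:
  assumes "LB R t *v v = l *\<^sub>R v" "l < 0" "v \<noteq> 0"
  shows "v$2 * cos (t/2) - v$1 * sin (t/2) \<noteq> 0"
proof
  assume Q: "v$2 * cos (t/2) - v$1 * sin (t/2) = 0"
  define C S where "C = cos (t/2)" and "S = sin (t/2)"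
  define N P where "N = (v$1)\<^sup>2 + (v$2)\<^sup>2" and "P = v$1 * C + v$2 * S"
  have CS: "S\<^sup>2 + C\<^sup>2 = 1"
    by (simp add: C_def S_def)
  have c: "cos t = C\<^sup>2 - S\<^sup>2" and s: "sin t = 2 * S * C"
    using cos_double[of "t/2"] sin_double[of "t/2"] by (simp_all add: C_def S_def)
  have "v $ 3 = 0"
    using LB_eigen_plane(1) assms R by fastforce
  with assms(3) have "0 < N"
    by (auto simp: N_def vec3_eq_iff add_pos_nonneg add_nonneg_pos)
  have "l * N = v$1 * ((cos t - R) * v$1 + sin t * v$2) + v$2 * (sin t * v$1 - cos t * v$2)"
    using assms(1) unfolding LB_eigen_iff N_def by (simp add: algebra_simps power2_eq_square)
  also have "\<dots> = P\<^sup>2 - (v$2 * C - v$1 * S)\<^sup>2 - R * (v$1)\<^sup>2"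
    unfolding c s P_def by (simp add: algebra_simps power2_eq_square)
  also have "\<dots> = N - R * (v$1)\<^sup>2"
  proof -
    have "P\<^sup>2 + (v$2 * C - v$1 * S)\<^sup>2 = N * (S\<^sup>2 + C\<^sup>2)"
      unfolding P_def N_def by (simp add: algebra_simps power2_eq_square)
    with Q CS show ?thesis
      by (simp add: C_def S_def)
  qed
  finally have "l * N = N - R * (v$1)\<^sup>2" .
  moreover have "R * (v$1)\<^sup>2 \<le> R * N"
    using R by (simp add: N_def)
  moreover have "R * N < N"
    using R \<open>0 < N\<close> by simp
  moreover have "l * N < 0"
    using \<open>0 < N\<close> assms(2) by (simp add: mult_neg_pos)
  ultimately show False
    by linarith
qed

lemma not_oriented_splitting_omegaB: "\<not> oriented_splitting (omegaB R)"
proof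
  assume "oriented_splitting (omegaB R)"
  then obtain v :: "real \<Rightarrow> real^3" where cont: "continuous_on UNIV v"
    and per: "\<And>t. v (t + 2 * pi) = v t" and sec: "\<And>t. v t \<noteq> 0 \<and> v t \<in> once_line (LB R t)"
    unfolding oriented_splitting_def Lmat_omegaB by blast
  have neg_space: "neg_space (LB R t) = {v. \<exists>l<0. LB R t *v v = l *\<^sub>R v}" for t
    by (rule neg_space_eq_neg_eigenvectors) (use LB_neg_eigenvalue_unique in blast)
  define g where "g t = v t $ 2 * cos (t/2) - v t $ 1 * sin (t/2)" for t
  have "g t \<noteq> 0" for t
    using sec[of t] LB_neg_eigenvector_half_angle unfolding g_def once_line_LB neg_space by blast
  moreover have "continuous_on {0..2 * pi} g"
    unfolding g_def by (intro continuous_intros continuous_on_subset[OF cont]) auto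
  moreover have "g (2 * pi) = - g 0"
    using per[of 0] by (simp add: g_def)
  ultimately show False
    using continuous_antiperiodic_has_zero[of 0 "2 * pi" g] by auto
qed

end

theorem mainTheorem5:
  shows "omegaA = fadd (star3 muA) (dtheta_wedge muA)
       \<and> sd_harmonic omegaA \<and> vanishes_exactly_on_core omegaA \<and> nondegenerate omegaA
       \<and> (\<forall>t. Lmat omegaA t = vector [vector [1, 0, 0], vector [0, 1, 0], vector [0, 0, -2]])
       \<and> oriented_splitting omegaA
       \<and> (\<forall>R::real. 0 < R \<and> R < 1 \<longrightarrow>
            sd_harmonic (omegaB R) \<and> vanishes_exactly_on_core (omegaB R)
          \<and> nondegenerate (omegaB R)
          \<and> (\<forall>t. Lmat (omegaB R) t = vector [vector [cos t - R, sin t, 0],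
                                              vector [sin t, - cos t, 0],
                                              vector [0, 0, R]])
          \<and> \<not> oriented_splitting (omegaB R))"
  using omegaA_eq_star3_muA sd_harmonic_omegaA vanishes_exactly_on_core_omegaA nondegenerate_omegaA
    Lmat_omegaA oriented_splitting_omegaA sd_harmonic_omegaB vanishes_exactly_on_core_omegaB
    nondegenerate_omegaB Lmat_omegaB not_oriented_splitting_omegaB
  by (simp add: LB_def)

end
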